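(* Let $G$ be an abelian Hausdorff topological group in which every cyclic subgroup is discrete. The following are equivalent: (i) $G$ contains an infinite absolutely summable set; (ii) $G$ contains a subgroup topologically isomorphic to $P_B$ for some infinite subset $B$ of $G$. Furthermore, if $G$ is complete, these are also equivalent to: (iii) $G$ contains an infinite absolutely Cauchy summable set.
   Context: For $a\in G$, $\langle a\rangle$ is the cyclic subgroup generated by $a$ with the subspace topology, and $P_B=\prod_{b\in B}\langle b\rangle$ carries the Tychonoff product topology. $A\subseteq G$ is absolutely summable if for every family $\{z_a:a\in A\}$ of integers there is $g\in G$ such that for every neighbourhood $U$ of $0$ there is a finite $F\subseteq A$ with $g-\sum_{a\in E}z_aa\in U$ for every finite $E\subseteq A$ containing $F$. $A$ is absolutely Cauchy summable if for every neighbourhood $U$ of $0$ there is a finite $F\subseteq A$ such that the subgroup generated by $A\setminus F$ is contained in $U$. *)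

theory Defs
  imports "HOL-Analysis.Analysis"
begin

fun natmult :: "nat \<Rightarrow> 'a::group_add \<Rightarrow> 'a" where
  "natmult 0 a = 0"
| "natmult (Suc n) a = a + natmult n a"

definition zmult :: "int \<Rightarrow> 'a::group_add \<Rightarrow> 'a" where
  "zmult z a = (if 0 \<le> z then natmult (nat z) a else - natmult (nat (- z)) a)"

definition is_subgroup :: "'a::group_add set \<Rightarrow> bool" where
  "is_subgroup H \<longleftrightarrow> 0 \<in> H \<and> (\<forall>x\<in>H. \<forall>y\<in>H. x - y \<in> H)"

definition gen_subgroup :: "'a::group_add set \<Rightarrow> 'a set" where
  "gen_subgroup S = \<Inter>{H. is_subgroup H \<and> S \<subseteq> H}"

definition cyclic_subgroup :: "'a::group_add \<Rightarrow> 'a set" where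
  "cyclic_subgroup a = range (\<lambda>z. zmult z a)"

definition discrete_subspace :: "'a::topological_space set \<Rightarrow> bool" where
  "discrete_subspace S \<longleftrightarrow> (\<forall>x\<in>S. \<exists>U. open U \<and> U \<inter> S = {x})"

definition absolutely_summable :: "'a::topological_ab_group_add set \<Rightarrow> bool" where
  "absolutely_summable A \<longleftrightarrow>
     (\<forall>z :: 'a \<Rightarrow> int. \<exists>g. \<forall>U. open U \<and> 0 \<in> U \<longrightarrow>
        (\<exists>F. finite F \<and> F \<subseteq> A \<and>
           (\<forall>E. finite E \<and> F \<subseteq> E \<and> E \<subseteq> A \<longrightarrow> g - (\<Sum>a\<in>E. zmult (z a) a) \<in> U)))"

definition absolutely_Cauchy_summable :: "'a::topological_ab_group_add set \<Rightarrow> bool" where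
  "absolutely_Cauchy_summable A \<longleftrightarrow>
     (\<forall>U. open U \<and> 0 \<in> U \<longrightarrow>
        (\<exists>F. finite F \<and> F \<subseteq> A \<and> gen_subgroup (A - F) \<subseteq> U))"

text \<open>Completeness of an abelian topological group w.r.t. its group uniformity:
  every Cauchy filter converges.\<close>
definition group_complete :: "'a::topological_ab_group_add itself \<Rightarrow> bool" where
  "group_complete _ \<longleftrightarrow>
     (\<forall>F :: 'a filter. F \<noteq> bot \<and>
        (\<forall>U. open U \<and> 0 \<in> U \<longrightarrow> (\<exists>S. eventually (\<lambda>x. x \<in> S) F \<and> (\<forall>x\<in>S. \<forall>y\<in>S. x - y \<in> U)))
        \<longrightarrow> (\<exists>g. F \<le> nhds g))"

text \<open>The product P_B of the cyclic subgroups <b>, b in B, with Tychonoff topology;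
  elements are extensional functions on B, group operation pointwise.\<close>
definition P_top :: "'a::topological_ab_group_add set \<Rightarrow> ('a \<Rightarrow> 'a) topology" where
  "P_top B = product_topology (\<lambda>b. subtopology euclidean (cyclic_subgroup b)) B"

definition P_add :: "'a::topological_ab_group_add set \<Rightarrow> ('a \<Rightarrow> 'a) \<Rightarrow> ('a \<Rightarrow> 'a) \<Rightarrow> ('a \<Rightarrow> 'a)" where
  "P_add B x y = restrict (\<lambda>b. x b + y b) B"

definition contains_copy_of_P :: "'a::topological_ab_group_add set \<Rightarrow> bool" where
  "contains_copy_of_P B \<longleftrightarrow>
     (\<exists>(H::'a set) f. is_subgroup H \<and>
        bij_betw f (topspace (P_top B)) H \<and>
        (\<forall>x\<in>topspace (P_top B). \<forall>y\<in>topspace (P_top B). f (P_add B x y) = f x + f y) \<and>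
        homeomorphic_map (P_top B) (subtopology euclidean H) f)"

end

theory Submission
  imports Defs
begin

(*
  An absolutely summable set is absolutely Cauchy summable by a gliding hump argument, and in a
  complete group the converse holds because the net of finite partial sums is Cauchy.

  If G contains a copy of P_B, the images of the unit vectors of P_B form an infinite absolutely
  summable set: a continuous additive map on P_B is the sum of its values on the coordinates.

  Conversely, starting from an infinite absolutely summable set A, choose b_0, b_1, ... in A one at
  a time. Each b_n is taken outside a finite set F_n beyond which all integer combinations of
  elements of A lie in a small neighbourhood V_n, and discreteness of the cyclic subgroup generated
  by b_n lets us shrink the neighbourhood U_n isolating 0 in the group generated by b_0, ..., b_(n-1)
  so that it still isolates 0 after adding b_n. Summation w |-> sum of w b over B = {b_n} is then
  injective, continuous and open on P_B, hence a topological isomorphism onto its image.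
*)

lemma zmult_0 [simp]: "zmult 0 a = 0"
  by (simp add: zmult_def)

lemma zmult_1 [simp]: "zmult 1 (a::'a::group_add) = a"
  by (simp add: zmult_def)

lemma zmult_zero_right [simp]: "zmult z (0::'a::group_add) = 0"
proof -
  have "natmult n (0::'a) = 0" for n
    by (induction n) auto
  then show ?thesis
    by (simp add: zmult_def)
qed

lemma zmult_add_1: "zmult (z + 1) (a::'a::ab_group_add) = zmult z a + a"
proof (cases "0 \<le> z")
  case True
  then have "nat (z + 1) = Suc (nat z)"
    by simp
  with True show ?thesis
    by (simp add: zmult_def add.commute)
next
  case False
  show ?thesis
  proof (cases "z = -1")
    case False': False
    with False have "nat (- z) = Suc (nat (- (z + 1)))"
      by simp
    with False False' show ?thesis
      by (simp add: zmult_def)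
  qed (simp add: zmult_def)
qed

lemma zmult_add: "zmult (z + w) (a::'a::ab_group_add) = zmult z a + zmult w a"
proof (induction w rule: int_induct[where k = 0])
  case (step1 i)
  then show ?case
    using zmult_add_1[of "z + i" a] zmult_add_1[of i a] by (simp add: add.assoc)
next
  case (step2 i)
  then show ?case
    using zmult_add_1[of "z + (i - 1)" a] zmult_add_1[of "i - 1" a] by (simp add: algebra_simps)
qed simp

lemma zmult_uminus: "zmult (- z) (a::'a::ab_group_add) = - zmult z a"
  using minus_unique[of "zmult z a" "zmult (- z) a"] zmult_add[of z "- z" a] by simp

lemma zmult_diff: "zmult (z - w) (a::'a::ab_group_add) = zmult z a - zmult w a"
  using zmult_add[of z "- w" a] by (simp add: zmult_uminus)

lemma is_subgroup_0: "is_subgroup H \<Longrightarrow> 0 \<in> H"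
  by (simp add: is_subgroup_def)

lemma is_subgroup_diff: "is_subgroup H \<Longrightarrow> x \<in> H \<Longrightarrow> y \<in> H \<Longrightarrow> x - y \<in> H"
  by (simp add: is_subgroup_def)

lemma is_subgroup_uminus: "is_subgroup H \<Longrightarrow> x \<in> H \<Longrightarrow> - x \<in> H"
  using is_subgroup_diff[of H 0 x] by (simp add: is_subgroup_0)

lemma is_subgroup_add:
  "is_subgroup (H::'a::ab_group_add set) \<Longrightarrow> x \<in> H \<Longrightarrow> y \<in> H \<Longrightarrow> x + y \<in> H"
  using is_subgroup_diff[of H x "- y"] by (simp add: is_subgroup_uminus)

lemma is_subgroup_sum:
  assumes "is_subgroup (H::'a::ab_group_add set)" "\<And>a. a \<in> E \<Longrightarrow> f a \<in> H"
  shows "sum f E \<in> H"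
  using assms(2) by (induction E rule: infinite_finite_induct)
    (simp_all add: is_subgroup_0 is_subgroup_add assms(1))

lemma is_subgroup_zmult:
  assumes "is_subgroup (H::'a::ab_group_add set)" "a \<in> H"
  shows "zmult z a \<in> H"
proof (induction z rule: int_induct[where k = 0])
  case (step2 i)
  then show ?case
    using zmult_add_1[of "i - 1" a] is_subgroup_diff[OF assms(1) _ assms(2), of "zmult i a"] by simp
qed (simp_all add: zmult_add_1 is_subgroup_0 is_subgroup_add assms)

lemma is_subgroup_cyclic_subgroup: "is_subgroup (cyclic_subgroup (a::'a::ab_group_add))"
  unfolding is_subgroup_def cyclic_subgroup_def
proof (intro conjI ballI)
  show "0 \<in> range (\<lambda>z. zmult z a)"
    by (metis rangeI zmult_0)
qed (auto simp flip: zmult_diff)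

lemma zmult_in_cyclic_subgroup: "zmult z a \<in> cyclic_subgroup a"
  by (simp add: cyclic_subgroup_def)

lemma cyclic_subgroup_subset:
  "is_subgroup (H::'a::ab_group_add set) \<Longrightarrow> a \<in> H \<Longrightarrow> cyclic_subgroup a \<subseteq> H"
  unfolding cyclic_subgroup_def using is_subgroup_zmult by blast

lemma is_subgroup_gen_subgroup: "is_subgroup (gen_subgroup S)"
  unfolding gen_subgroup_def is_subgroup_def by auto

lemma gen_subgroup_superset: "S \<subseteq> gen_subgroup S"
  unfolding gen_subgroup_def by auto

lemma gen_subgroup_least: "is_subgroup H \<Longrightarrow> S \<subseteq> H \<Longrightarrow> gen_subgroup S \<subseteq> H"
  unfolding gen_subgroup_def by auto

lemma gen_subgroup_mono: "S \<subseteq> T \<Longrightarrow> gen_subgroup S \<subseteq> gen_subgroup T"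
  using gen_subgroup_least[OF is_subgroup_gen_subgroup, of S T] gen_subgroup_superset[of T] by blast

lemma cyclic_subgroup_subset_gen_subgroup:
  "(a::'a::ab_group_add) \<in> S \<Longrightarrow> cyclic_subgroup a \<subseteq> gen_subgroup S"
  using cyclic_subgroup_subset[OF is_subgroup_gen_subgroup] gen_subgroup_superset by blast

lemma sum_in_gen_subgroup:
  assumes "\<And>b. b \<in> E \<Longrightarrow> w b \<in> cyclic_subgroup (b::'a::ab_group_add)" "E \<subseteq> S"
  shows "sum w E \<in> gen_subgroup S"
  using assms cyclic_subgroup_subset_gen_subgroup
  by (intro is_subgroup_sum[OF is_subgroup_gen_subgroup]) blast

lemma gen_subgroup_eq_combinations:
  "gen_subgroup (S::'a::ab_group_add set) =
     {\<Sum>a\<in>E. zmult (z a) a | E z. finite E \<and> E \<subseteq> S}" (is "_ = ?C")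
proof
  have "is_subgroup ?C"
    unfolding is_subgroup_def
  proof (intro conjI ballI)
    show "0 \<in> ?C"
      by (rule CollectI, rule exI[of _ "{}"]) auto
    fix x y assume "x \<in> ?C" "y \<in> ?C"
    then obtain E z E' z' where E: "finite E" "E \<subseteq> S" "x = (\<Sum>a\<in>E. zmult (z a) a)"
      and E': "finite E'" "E' \<subseteq> S" "y = (\<Sum>a\<in>E'. zmult (z' a) a)"
      by blast
  
    define c where "c X u a = (if a \<in> X then u a else 0)" for X and u :: "'a \<Rightarrow> int" and a
    have extend: "(\<Sum>a\<in>X. zmult (u a) a) = (\<Sum>a\<in>E \<union> E'. zmult (c X u a) a)"
      if "X \<subseteq> E \<union> E'" for X u
      using that E(1) E'(1) by (intro sum.mono_neutral_cong_left) (auto simp: c_def)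
    have "x - y = (\<Sum>a\<in>E \<union> E'. zmult (c E z a - c E' z' a) a)"
      using extend[of E z] extend[of E' z'] E E' by (simp add: zmult_diff sum_subtractf)
    then show "x - y \<in> ?C"
      using E E' by (intro CollectI exI[of _ "E \<union> E'"] exI[of _ "\<lambda>a. c E z a - c E' z' a"]) auto
  qed
  moreover have "S \<subseteq> ?C"
  proof
    fix a assume "a \<in> S"
    then show "a \<in> ?C"
      by (intro CollectI exI[of _ "{a}"] exI[of _ "\<lambda>_. 1"]) simp
  qed
  ultimately show "gen_subgroup S \<subseteq> ?C"
    by (rule gen_subgroup_least)
  show "?C \<subseteq> gen_subgroup S"
    using sum_in_gen_subgroup[of _ "\<lambda>a. zmult (_ a) a"] zmult_in_cyclic_subgroup by blast
qed

lemma gen_subgroup_insert: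
  "gen_subgroup (insert b S) \<subseteq> {d + c | d c. d \<in> gen_subgroup S \<and> c \<in> cyclic_subgroup (b::'a::ab_group_add)}"
  (is "_ \<subseteq> ?D")
proof (rule gen_subgroup_least)
  show "is_subgroup ?D"
    unfolding is_subgroup_def
  proof (intro conjI ballI)
    show "0 \<in> ?D"
      using is_subgroup_0[OF is_subgroup_gen_subgroup] is_subgroup_0[OF is_subgroup_cyclic_subgroup]
      by force
    fix x y assume "x \<in> ?D" "y \<in> ?D"
    then obtain d1 c1 d2 c2 where "x = d1 + c1" "y = d2 + c2"
      "d1 \<in> gen_subgroup S" "c1 \<in> cyclic_subgroup b" "d2 \<in> gen_subgroup S" "c2 \<in> cyclic_subgroup b"
      by blast
    moreover from this have "x - y = (d1 - d2) + (c1 - c2)"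
      by simp
    ultimately show "x - y \<in> ?D"
      using is_subgroup_diff[OF is_subgroup_gen_subgroup] is_subgroup_diff[OF is_subgroup_cyclic_subgroup]
      by blast
  qed
  show "insert b S \<subseteq> ?D"
  proof
    fix x assume "x \<in> insert b S"
    moreover have "b = 0 + b" "x = x + 0"
      by simp_all
    ultimately show "x \<in> ?D"
      using gen_subgroup_superset[of S] is_subgroup_0[OF is_subgroup_gen_subgroup, of S]
        is_subgroup_0[OF is_subgroup_cyclic_subgroup, of b] zmult_in_cyclic_subgroup[of 1 b]
      by (metis (mono_tags, lifting) insertE mem_Collect_eq subsetD zmult_1)
  qed
qed

lemma zero_nhds_diff:
  fixes W :: "'a::topological_ab_group_add set"
  assumes "open W" "0 \<in> W"
  obtains V where "open V" "0 \<in> V" "\<And>x y. x \<in> V \<Longrightarrow> y \<in> V \<Longrightarrow> x - y \<in> W"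
proof -
  have "((\<lambda>p. fst p - snd p) \<longlongrightarrow> 0 - 0) (nhds (0::'a) \<times>\<^sub>F nhds 0)"
    by (intro tendsto_diff filterlim_fst filterlim_snd)
  then have "eventually (\<lambda>p. fst p - snd p \<in> W) (nhds (0::'a) \<times>\<^sub>F nhds 0)"
    using assms by (simp add: topological_tendstoD)
  then obtain P Q where "eventually P (nhds 0)" "eventually Q (nhds 0)"
    and PQ: "\<And>x y. P x \<Longrightarrow> Q y \<Longrightarrow> x - y \<in> W"
    unfolding eventually_prod_filter by auto
  then obtain S1 S2 where "open S1" "0 \<in> S1" "\<forall>x\<in>S1. P x" "open S2" "0 \<in> S2" "\<forall>x\<in>S2. Q x"
    unfolding eventually_nhds by meson
  with PQ show ?thesis
    by (intro that[of "S1 \<inter> S2"]) auto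
qed

lemma zero_nhds_diff3:
  fixes W :: "'a::topological_ab_group_add set"
  assumes "open W" "0 \<in> W"
  obtains V where "open V" "0 \<in> V" "\<And>x y z. x \<in> V \<Longrightarrow> y \<in> V \<Longrightarrow> z \<in> V \<Longrightarrow> x - y - z \<in> W"
proof -
  obtain V1 where V1: "open V1" "0 \<in> V1" "\<And>x y. x \<in> V1 \<Longrightarrow> y \<in> V1 \<Longrightarrow> x - y \<in> W"
    using zero_nhds_diff[OF assms] by blast
  obtain V2 where V2: "open V2" "0 \<in> V2" "\<And>x y. x \<in> V2 \<Longrightarrow> y \<in> V2 \<Longrightarrow> x - y \<in> V1"
    using zero_nhds_diff[OF V1(1,2)] by blast
  have "z \<in> V1" if "z \<in> V2" for z
    using V2(3)[OF that V2(2)] by simp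
  with V1(3) V2 show ?thesis
    by (intro that[of V2]) auto
qed

subsection \<open>Absolute summability\<close>

lemma tendsto_iff_diff_tendsto_0:
  fixes f :: "'b \<Rightarrow> 'a::topological_ab_group_add"
  shows "(f \<longlongrightarrow> g) F \<longleftrightarrow> ((\<lambda>x. g - f x) \<longlongrightarrow> 0) F"
proof
  assume "(f \<longlongrightarrow> g) F"
  from tendsto_diff[OF tendsto_const this, of g] show "((\<lambda>x. g - f x) \<longlongrightarrow> 0) F"
    by simp
next
  assume "((\<lambda>x. g - f x) \<longlongrightarrow> 0) F"
  from tendsto_diff[OF tendsto_const this, of g] show "(f \<longlongrightarrow> g) F"
    by simp
qed

lemma has_sum_iff_nhds_0:
  fixes f :: "'b \<Rightarrow> 'a::topological_ab_group_add"
  shows "(f has_sum g) A \<longleftrightarrow> (\<forall>U. open U \<and> 0 \<in> U \<longrightarrow> (\<exists>F. finite F \<and> F \<subseteq> A \<and>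
           (\<forall>E. finite E \<and> F \<subseteq> E \<and> E \<subseteq> A \<longrightarrow> g - sum f E \<in> U)))"
  unfolding has_sum_def
  by (subst tendsto_iff_diff_tendsto_0) (simp add: tendsto_def eventually_finite_subsets_at_top imp_conjL)

lemma has_sum_nhds_0D:
  fixes f :: "'b \<Rightarrow> 'a::topological_ab_group_add"
  assumes "(f has_sum g) A" "open U" "0 \<in> U"
  obtains F where "finite F" "F \<subseteq> A"
    "\<And>E. finite E \<Longrightarrow> F \<subseteq> E \<Longrightarrow> E \<subseteq> A \<Longrightarrow> g - sum f E \<in> U"
  using assms(1)[unfolded has_sum_iff_nhds_0, rule_format, OF conjI[OF assms(2,3)]] that by auto

lemma absolutely_summable_iff_summable_on:
  "absolutely_summable (A::'a::topological_ab_group_add set) \<longleftrightarrow>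
     (\<forall>z. (\<lambda>a. zmult (z a) a) summable_on A)"
  unfolding absolutely_summable_def summable_on_def has_sum_iff_nhds_0 by simp

lemma absolutely_summable_summable_on:
  "absolutely_summable A \<Longrightarrow> (\<lambda>a. zmult (z a) a) summable_on A"
  unfolding absolutely_summable_iff_summable_on by (erule allE)

lemma absolutely_summable_subset:
  assumes "absolutely_summable A" "B \<subseteq> A"
  shows "absolutely_summable B"
  unfolding absolutely_summable_iff_summable_on
proof
  fix z :: "'a \<Rightarrow> int"
  have "(\<lambda>a. zmult (if a \<in> B then z a else 0) a) summable_on A"
    using absolutely_summable_summable_on[OF assms(1)] .
  then show "(\<lambda>a. zmult (z a) a) summable_on B"
    using assms(2) by (subst (asm) summable_on_cong_neutral[where T = B]) auto
qed

text \<open>Gliding hump: for pairwise disjoint finite blocks the combined coefficient function has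
  a convergent sum, so the tail of the partial sums, and with it some block sum, is small.\<close>

lemma absolutely_summable_disjoint_blocks:
  fixes A :: "'a::topological_ab_group_add set" and E :: "nat \<Rightarrow> 'a set"
  assumes "absolutely_summable A" "open U" "0 \<in> U"
    and blocks: "\<And>n. finite (E n) \<and> E n \<subseteq> A"
    and disjoint: "\<And>m n. m \<noteq> n \<Longrightarrow> E m \<inter> E n = {}"
  shows "\<exists>n. (\<Sum>a\<in>E n. zmult (z n a) a) \<in> U"
proof -
  define idx where "idx a = (THE n. a \<in> E n)" for a
  have idx: "idx a = n" if "a \<in> E n" for a n
    unfolding idx_def using that disjoint by (intro the_equality) auto
  obtain W where W: "open W" "0 \<in> W" "\<And>x y. x \<in> W \<Longrightarrow> y \<in> W \<Longrightarrow> x - y \<in> U"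
    using zero_nhds_diff[OF assms(2,3)] by blast
  define f where "f a = zmult (z (idx a) a) a" for a
  have "f summable_on A"
    unfolding f_def by (rule absolutely_summable_summable_on[OF assms(1)])
  then obtain g where g: "(f has_sum g) A"
    unfolding summable_on_def ..
  obtain F where F: "finite F" "F \<subseteq> A"
    and near: "\<And>E. finite E \<Longrightarrow> F \<subseteq> E \<Longrightarrow> E \<subseteq> A \<Longrightarrow> g - sum f E \<in> W"
    by (fact has_sum_nhds_0D[OF g W(1,2)])
  have "{n. E n \<inter> F \<noteq> {}} \<subseteq> idx ` F"
  proof
    fix n assume "n \<in> {n. E n \<inter> F \<noteq> {}}"
    then obtain a where "a \<in> E n" "a \<in> F"
      by blast
    then show "n \<in> idx ` F"
      using idx[of a n] by (metis image_eqI)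
  qed
  then have "finite {n. E n \<inter> F \<noteq> {}}"
    using F(1) by (rule finite_subset[OF _ finite_imageI])
  then obtain n where n: "E n \<inter> F = {}"
    using ex_new_if_finite[OF infinite_UNIV_nat] by blast
  have "sum f (F \<union> E n) = sum f F + sum f (E n)"
    using n F(1) blocks[of n] by (intro sum.union_disjoint) auto
  then have "(g - sum f F) - (g - sum f (F \<union> E n)) = sum f (E n)"
    by (simp add: algebra_simps)
  moreover have "(g - sum f F) - (g - sum f (F \<union> E n)) \<in> U"
    using F blocks[of n] by (intro W(3) near) auto
  moreover have "sum f (E n) = (\<Sum>a\<in>E n. zmult (z n a) a)"
    by (intro sum.cong) (simp_all add: f_def idx)
  ultimately show ?thesis
    by auto
qed

lemma exists_disjoint_blocks:
  assumes "\<And>F. finite F \<Longrightarrow> F \<subseteq> A \<Longrightarrow> finite (E F) \<and> E F \<subseteq> A - F"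
  shows "\<exists>D::nat \<Rightarrow> 'a set. (\<forall>n. finite (D n) \<and> D n \<subseteq> A) \<and> (\<forall>m n. m \<noteq> n \<longrightarrow> E (D m) \<inter> E (D n) = {})"
proof -
  define D where "D = rec_nat {} (\<lambda>_ D. D \<union> E D)"
  have D_Suc: "D (Suc n) = D n \<union> E (D n)" for n
    by (simp add: D_def)
  have D: "finite (D n) \<and> D n \<subseteq> A" for n
    by (induction n) (use assms in \<open>auto simp: D_def\<close>)
  have "mono D"
    by (rule incseq_SucI) (simp add: D_Suc)
  have "E (D m) \<inter> E (D n) = {}" if "m < n" for m n
  proof -
    have "E (D m) \<subseteq> D n"
      using monoD[OF \<open>mono D\<close>, of "Suc m" n] that by (auto simp: D_Suc)
    then show ?thesis
      using assms[of "D n"] D[of n] by blast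
  qed
  then have "\<forall>m n. m \<noteq> n \<longrightarrow> E (D m) \<inter> E (D n) = {}"
    by (metis inf_commute linorder_neqE_nat)
  with D show ?thesis
    by blast
qed

lemma absolutely_summable_imp_Cauchy_summable:
  fixes A :: "'a::topological_ab_group_add set"
  assumes summable: "absolutely_summable A"
  shows "absolutely_Cauchy_summable A"
proof (rule ccontr)
  assume "\<not> ?thesis"
  then obtain U where U: "open U" "0 \<in> U"
    and large: "\<And>F. finite F \<Longrightarrow> F \<subseteq> A \<Longrightarrow> \<not> gen_subgroup (A - F) \<subseteq> U"
    unfolding absolutely_Cauchy_summable_def by blast
  have "\<forall>F\<in>{F. finite F \<and> F \<subseteq> A}. \<exists>Ez. finite (fst Ez) \<and> fst Ez \<subseteq> A - F \<and>
      (\<Sum>a\<in>fst Ez. zmult (snd Ez a) a) \<notin> U"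
  proof
    fix F assume "F \<in> {F. finite F \<and> F \<subseteq> A}"
    then obtain x where "x \<in> gen_subgroup (A - F)" "x \<notin> U"
      using large by auto
    then show "\<exists>Ez. finite (fst Ez) \<and> fst Ez \<subseteq> A - F \<and> (\<Sum>a\<in>fst Ez. zmult (snd Ez a) a) \<notin> U"
      unfolding gen_subgroup_eq_combinations by auto
  qed
  from bchoice[OF this] obtain c where c: "\<forall>F\<in>{F. finite F \<and> F \<subseteq> A}.
      finite (fst (c F)) \<and> fst (c F) \<subseteq> A - F \<and> (\<Sum>a\<in>fst (c F). zmult (snd (c F) a) a) \<notin> U" ..
  define E where "E F = fst (c F)" for F
  define z where "z F = snd (c F)" for F
  have E: "finite (E F) \<and> E F \<subseteq> A - F \<and> (\<Sum>a\<in>E F. zmult (z F a) a) \<notin> U"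
    if "finite F" "F \<subseteq> A" for F
    using c that unfolding E_def z_def by blast
  have "finite (E F) \<and> E F \<subseteq> A - F" if "finite F" "F \<subseteq> A" for F
    using E[OF that] by blast
  then have "\<exists>D::nat \<Rightarrow> 'a set. (\<forall>n. finite (D n) \<and> D n \<subseteq> A) \<and>
      (\<forall>m n. m \<noteq> n \<longrightarrow> E (D m) \<inter> E (D n) = {})"
    by (rule exists_disjoint_blocks)
  then obtain D :: "nat \<Rightarrow> 'a set" where D: "\<forall>n. finite (D n) \<and> D n \<subseteq> A"
    and "\<forall>m n. m \<noteq> n \<longrightarrow> E (D m) \<inter> E (D n) = {}"
    by blast
  then have disjoint: "E (D m) \<inter> E (D n) = {}" if "m \<noteq> n" for m n
    using that by blast
  have blocks: "finite (E (D n)) \<and> E (D n) \<subseteq> A" for n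
    using E[of "D n"] D by blast
  obtain n where "(\<Sum>a\<in>E (D n). zmult (z (D n) a) a) \<in> U"
    using absolutely_summable_disjoint_blocks[where E = "\<lambda>n. E (D n)" and z = "\<lambda>n. z (D n)",
        OF summable U blocks disjoint] by blast
  then show False
    using E[of "D n"] D by blast
qed

lemma absolutely_Cauchy_summable_partial_sums:
  fixes A :: "'a::topological_ab_group_add set"
  assumes "absolutely_Cauchy_summable A" "open U" "0 \<in> U"
  shows "\<exists>F. finite F \<and> F \<subseteq> A \<and> (\<forall>E E'. finite E \<and> F \<subseteq> E \<and> E \<subseteq> A \<and> finite E' \<and> F \<subseteq> E' \<and> E' \<subseteq> A
    \<longrightarrow> (\<Sum>a\<in>E. zmult (z a) a) - (\<Sum>a\<in>E'. zmult (z a) a) \<in> U)"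
proof -
  define f where "f a = zmult (z a) a" for a
  obtain F where F: "finite F" "F \<subseteq> A" "gen_subgroup (A - F) \<subseteq> U"
    using assms unfolding absolutely_Cauchy_summable_def by blast
  have "\<forall>E E'. finite E \<and> F \<subseteq> E \<and> E \<subseteq> A \<and> finite E' \<and> F \<subseteq> E' \<and> E' \<subseteq> A
    \<longrightarrow> sum f E - sum f E' \<in> U"
  proof (intro allI impI)
    fix E E' assume "finite E \<and> F \<subseteq> E \<and> E \<subseteq> A \<and> finite E' \<and> F \<subseteq> E' \<and> E' \<subseteq> A"
    then have E: "finite E" "F \<subseteq> E" "E \<subseteq> A" and E': "finite E'" "F \<subseteq> E'" "E' \<subseteq> A"
      by auto
    have "sum f E - sum f E' = sum f (E - F) - sum f (E' - F)"
      using E E' sum.subset_diff[of F E f] sum.subset_diff[of F E' f] by simp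
    also have "\<dots> \<in> gen_subgroup (A - F)"
      using E E' zmult_in_cyclic_subgroup unfolding f_def
      by (intro is_subgroup_diff[OF is_subgroup_gen_subgroup] sum_in_gen_subgroup) auto
    finally show "sum f E - sum f E' \<in> U"
      using F(3) by auto
  qed
  with F(1,2) show ?thesis
    unfolding f_def by blast
qed

lemma Cauchy_summable_imp_absolutely_summable:
  fixes A :: "'a::topological_ab_group_add set"
  assumes Cauchy: "absolutely_Cauchy_summable A" and complete: "group_complete TYPE('a)"
  shows "absolutely_summable A"
  unfolding absolutely_summable_iff_summable_on
proof
  fix z :: "'a \<Rightarrow> int"
  define f where "f a = zmult (z a) a" for a
  define \<F> where "\<F> = filtermap (sum f) (finite_subsets_at_top A)"
  have "\<exists>S. eventually (\<lambda>x. x \<in> S) \<F> \<and> (\<forall>x\<in>S. \<forall>y\<in>S. x - y \<in> U)"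
    if U: "open U" "0 \<in> U" for U
  proof -
    obtain F where F: "finite F" "F \<subseteq> A"
      and close: "\<forall>E E'. finite E \<and> F \<subseteq> E \<and> E \<subseteq> A \<and> finite E' \<and> F \<subseteq> E' \<and> E' \<subseteq> A
        \<longrightarrow> sum f E - sum f E' \<in> U"
      using absolutely_Cauchy_summable_partial_sums[OF Cauchy U, of z] unfolding f_def by blast
    define S where "S = sum f ` {E. finite E \<and> F \<subseteq> E \<and> E \<subseteq> A}"
    have "eventually (\<lambda>x. x \<in> S) \<F>"
      unfolding \<F>_def eventually_filtermap eventually_finite_subsets_at_top S_def
      using F by (intro exI[of _ F]) auto
    moreover have "\<forall>x\<in>S. \<forall>y\<in>S. x - y \<in> U"
      unfolding S_def
    proof (intro ballI)
      fix x y assume "x \<in> sum f ` {E. finite E \<and> F \<subseteq> E \<and> E \<subseteq> A}"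
        "y \<in> sum f ` {E. finite E \<and> F \<subseteq> E \<and> E \<subseteq> A}"
      then obtain E E' where "finite E" "F \<subseteq> E" "E \<subseteq> A" "x = sum f E"
        "finite E'" "F \<subseteq> E'" "E' \<subseteq> A" "y = sum f E'"
        by auto
      with close show "x - y \<in> U"
        by simp
    qed
    ultimately show ?thesis
      by blast
  qed
  moreover have "\<F> \<noteq> bot"
    unfolding \<F>_def by (simp add: filtermap_bot_iff)
  ultimately obtain g where "\<F> \<le> nhds g"
    using complete[unfolded group_complete_def, rule_format, of \<F>] by auto
  then have "(f has_sum g) A"
    unfolding has_sum_def filterlim_def \<F>_def .
  then show "(\<lambda>a. zmult (z a) a) summable_on A"
    unfolding summable_on_def f_def by blast
qed

subsection \<open>The product group \<open>P_B\<close>\<close>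

lemma topspace_P_top: "topspace (P_top B) = (\<Pi>\<^sub>E b\<in>B. cyclic_subgroup b)"
  by (simp add: P_top_def)

lemma openin_P_top_imp_finitely_determined:
  assumes "openin (P_top B) S" "x \<in> S"
  shows "\<exists>F. finite F \<and> F \<subseteq> B \<and> (\<forall>y\<in>topspace (P_top B). (\<forall>b\<in>F. y b = x b) \<longrightarrow> y \<in> S)"
proof -
  obtain U where U: "finite {b \<in> B. U b \<noteq> cyclic_subgroup b}" "x \<in> Pi\<^sub>E B U" "Pi\<^sub>E B U \<subseteq> S"
    using assms unfolding P_top_def openin_product_topology_alt by auto
  have "y \<in> S" if "y \<in> topspace (P_top B)" "\<forall>b\<in>{b \<in> B. U b \<noteq> cyclic_subgroup b}. y b = x b" for y
  proof -
    have "y \<in> Pi\<^sub>E B U"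
      using that U(2) by (auto simp: topspace_P_top PiE_iff)
    then show ?thesis
      using U(3) by blast
  qed
  with U(1) show ?thesis
    by blast
qed

lemma discrete_subspace_openin:
  assumes "discrete_subspace S" "T \<subseteq> S"
  shows "openin (subtopology euclidean S) T"
proof (subst openin_subopen, intro ballI)
  fix x assume "x \<in> T"
  then obtain U where "open U" "U \<inter> S = {x}"
    using assms unfolding discrete_subspace_def by blast
  then have "openin (subtopology euclidean S) {x}"
    unfolding openin_subtopology by auto
  with \<open>x \<in> T\<close> show "\<exists>V. openin (subtopology euclidean S) V \<and> x \<in> V \<and> V \<subseteq> T"
    by blast
qed

lemma finitely_determined_imp_openin_P_top:
  fixes B :: "'a::topological_ab_group_add set"
  assumes disc: "\<And>b::'a. discrete_subspace (cyclic_subgroup b)"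
    and "S \<subseteq> topspace (P_top B)"
    and det: "\<And>x. x \<in> S \<Longrightarrow>
      \<exists>F. finite F \<and> F \<subseteq> B \<and> (\<forall>y\<in>topspace (P_top B). (\<forall>b\<in>F. y b = x b) \<longrightarrow> y \<in> S)"
  shows "openin (P_top B) S"
  unfolding P_top_def openin_product_topology_alt
proof (intro ballI)
  fix x assume "x \<in> S"
  then obtain F where F: "finite F" "F \<subseteq> B"
    and in_S: "\<forall>y\<in>topspace (P_top B). (\<forall>b\<in>F. y b = x b) \<longrightarrow> y \<in> S"
    using det[OF \<open>x \<in> S\<close>] by blast
  have x: "x \<in> (\<Pi>\<^sub>E b\<in>B. cyclic_subgroup b)"
    using \<open>x \<in> S\<close> assms(2) by (auto simp: topspace_P_top)
  define U where "U b = (if b \<in> F then {x b} else cyclic_subgroup b)" for b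
  have "finite {b \<in> B. U b \<noteq> topspace (subtopology euclidean (cyclic_subgroup b))}"
    using F(1) by (rule finite_subset[rotated]) (auto simp: U_def)
  moreover have "openin (subtopology euclidean (cyclic_subgroup b)) (U b)" if "b \<in> B" for b
    using x that by (intro discrete_subspace_openin[OF disc]) (auto simp: U_def PiE_iff)
  moreover have "x \<in> Pi\<^sub>E B U"
    using x by (auto simp: U_def PiE_iff)
  moreover have "Pi\<^sub>E B U \<subseteq> S"
  proof
    fix y assume "y \<in> Pi\<^sub>E B U"
    then have "y \<in> topspace (P_top B)" "\<forall>b\<in>F. y b = x b"
      using x F(2) by (auto simp: topspace_P_top PiE_iff U_def split: if_splits)
    then show "y \<in> S"
      using in_S by blast
  qed
  ultimately show "\<exists>U. finite {b \<in> B. U b \<noteq> topspace (subtopology euclidean (cyclic_subgroup b))} \<and>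
      (\<forall>b\<in>B. openin (subtopology euclidean (cyclic_subgroup b)) (U b)) \<and> x \<in> Pi\<^sub>E B U \<and> Pi\<^sub>E B U \<subseteq> S"
    by blast
qed

definition P_mask :: "'a::ab_group_add set \<Rightarrow> 'a set \<Rightarrow> ('a \<Rightarrow> 'a) \<Rightarrow> 'a \<Rightarrow> 'a" where
  "P_mask B C x = restrict (\<lambda>b. if b \<in> C then x b else 0) B"

definition P_additive :: "'a::topological_ab_group_add set \<Rightarrow> (('a \<Rightarrow> 'a) \<Rightarrow> 'a) \<Rightarrow> bool" where
  "P_additive B f \<longleftrightarrow>
     (\<forall>x\<in>topspace (P_top B). \<forall>y\<in>topspace (P_top B). f (P_add B x y) = f x + f y)"

lemma P_additiveD:
  "P_additive B f \<Longrightarrow> x \<in> topspace (P_top B) \<Longrightarrow> y \<in> topspace (P_top B) \<Longrightarrow>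
    f (P_add B x y) = f x + f y"
  by (simp add: P_additive_def)

lemma P_mask_in_topspace: "x \<in> topspace (P_top B) \<Longrightarrow> P_mask B C x \<in> topspace (P_top B)"
  by (auto simp: topspace_P_top P_mask_def PiE_iff is_subgroup_0[OF is_subgroup_cyclic_subgroup])

lemma P_add_mask_disjoint:
  "C \<inter> D = {} \<Longrightarrow> P_add B (P_mask B C x) (P_mask B D x) = P_mask B (C \<union> D) x"
  unfolding P_add_def P_mask_def by (intro restrict_ext) auto

lemma P_mask_UNIV: "x \<in> topspace (P_top B) \<Longrightarrow> P_mask B UNIV x = x"
  by (auto simp: topspace_P_top P_mask_def PiE_iff extensional_def)

lemma P_additive_mask_empty:
  assumes "P_additive B f" "x \<in> topspace (P_top B)"
  shows "f (P_mask B {} x) = 0"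
proof -
  have "f (P_mask B {} x) = f (P_add B (P_mask B {} x) (P_mask B {} x))"
    using P_add_mask_disjoint[of "{}" "{}" B x] by simp
  also have "\<dots> = f (P_mask B {} x) + f (P_mask B {} x)"
    using assms by (intro P_additiveD P_mask_in_topspace)
  finally show ?thesis
    by simp
qed

lemma P_additive_mask_sum:
  assumes "P_additive B f" "x \<in> topspace (P_top B)" "finite C"
  shows "f (P_mask B C x) = (\<Sum>c\<in>C. f (P_mask B {c} x))"
  using assms(3)
proof (induction C rule: finite_induct)
  case empty
  then show ?case
    using P_additive_mask_empty[OF assms(1,2)] by simp
next
  case (insert c C)
  have "P_mask B (insert c C) x = P_add B (P_mask B {c} x) (P_mask B C x)"
    using insert(2) P_add_mask_disjoint[of "{c}" C B x] by simp
  then have "f (P_mask B (insert c C) x) = f (P_mask B {c} x) + f (P_mask B C x)"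
    using assms(1,2) by (simp add: P_additiveD P_mask_in_topspace)
  with insert show ?case
    by simp
qed

lemma P_additive_zmult:
  assumes "P_additive B f" "x \<in> topspace (P_top B)"
  shows "f (restrict (\<lambda>b. zmult k (x b)) B) = zmult k (f x)"
proof -
  define m where "m k = restrict (\<lambda>b. zmult k (x b)) B" for k
  have m: "m k \<in> topspace (P_top B)" for k
    using assms(2) by (auto simp: m_def topspace_P_top PiE_iff is_subgroup_zmult[OF is_subgroup_cyclic_subgroup])
  have m_Suc: "f (m (k + 1)) = f (m k) + f x" for k
  proof -
    have "m (k + 1) = P_add B (m k) x"
      unfolding m_def P_add_def by (intro restrict_ext) (simp add: zmult_add_1)
    then show ?thesis
      using P_additiveD[OF assms(1) m assms(2)] by simp
  qed
  have "f (m k) = zmult k (f x)"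
  proof (induction k rule: int_induct[where k = 0])
    case base
    have "m 0 = P_mask B {} x"
      by (simp add: m_def P_mask_def)
    then show ?case
      using P_additive_mask_empty[OF assms] by simp
  next
    case (step1 i)
    then show ?case
      by (simp add: m_Suc zmult_add_1)
  next
    case (step2 i)
    then show ?case
      using m_Suc[of "i - 1"] zmult_add_1[of "i - 1" "f x"] by simp
  qed
  then show ?thesis
    by (simp add: m_def)
qed

text \<open>The tail outside a finite set of coordinates is close to \<open>0\<close> in the product topology.\<close>

lemma continuous_P_additive_has_sum:
  assumes cont: "continuous_map (P_top B) euclidean f" and add: "P_additive B f"
    and x: "x \<in> topspace (P_top B)"
  shows "((\<lambda>c. f (P_mask B {c} x)) has_sum f x) B"
  unfolding has_sum_iff_nhds_0
proof (intro allI impI)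
  fix U :: "'a set" assume U: "open U \<and> 0 \<in> U"
  then have "openin (P_top B) {w \<in> topspace (P_top B). f w \<in> U}"
    using cont by (simp add: continuous_map_def)
  moreover have "P_mask B {} x \<in> {w \<in> topspace (P_top B). f w \<in> U}"
    using U P_additive_mask_empty[OF add x] P_mask_in_topspace[OF x] by simp
  ultimately obtain F where F: "finite F" "F \<subseteq> B"
    and small: "\<forall>y\<in>topspace (P_top B). (\<forall>b\<in>F. y b = P_mask B {} x b) \<longrightarrow>
      y \<in> {w \<in> topspace (P_top B). f w \<in> U}"
    by (metis (no_types, lifting) openin_P_top_imp_finitely_determined)
  have "f x - (\<Sum>c\<in>E. f (P_mask B {c} x)) \<in> U" if E: "finite E" "F \<subseteq> E" "E \<subseteq> B" for E
  proof -
    have "f x = f (P_add B (P_mask B E x) (P_mask B (- E) x))"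
      using P_add_mask_disjoint[of E "- E" B x] P_mask_UNIV[OF x] by simp
    also have "\<dots> = f (P_mask B E x) + f (P_mask B (- E) x)"
      using add x by (intro P_additiveD P_mask_in_topspace)
    also have "\<dots> = (\<Sum>c\<in>E. f (P_mask B {c} x)) + f (P_mask B (- E) x)"
      using P_additive_mask_sum[OF add x E(1)] by simp
    finally have "f x - (\<Sum>c\<in>E. f (P_mask B {c} x)) = f (P_mask B (- E) x)"
      by simp
    moreover have "\<forall>b\<in>F. P_mask B (- E) x b = P_mask B {} x b"
      using E(2) by (auto simp: P_mask_def)
    then have "f (P_mask B (- E) x) \<in> U"
      using small P_mask_in_topspace[OF x] by blast
    ultimately show ?thesis
      by simp
  qed
  with F show "\<exists>F. finite F \<and> F \<subseteq> B \<and>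
      (\<forall>E. finite E \<and> F \<subseteq> E \<and> E \<subseteq> B \<longrightarrow> f x - (\<Sum>c\<in>E. f (P_mask B {c} x)) \<in> U)"
    by blast
qed

lemma P_mask_unit_inj: "inj_on (\<lambda>c. P_mask B {c} (restrict (\<lambda>b. b) B)) (B - {0})"
proof (rule inj_onI)
  fix c c' assume c: "c \<in> B - {0}" "c' \<in> B - {0}"
    and "P_mask B {c} (restrict (\<lambda>b. b) B) = P_mask B {c'} (restrict (\<lambda>b. b) B)"
  then have "P_mask B {c} (restrict (\<lambda>b. b) B) c = P_mask B {c'} (restrict (\<lambda>b. b) B) c"
    by simp
  with c show "c = c'"
    by (auto simp: P_mask_def split: if_splits)
qed

lemma continuous_P_additive_has_sum_zmult:
  assumes cont: "continuous_map (P_top B) euclidean f" and add: "P_additive B f"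
  shows "((\<lambda>c. zmult (k c) (f (P_mask B {c} (restrict (\<lambda>b. b) B)))) has_sum
    f (restrict (\<lambda>b. zmult (k b) b) B)) B"
proof -
  define \<iota> where "\<iota> = restrict (\<lambda>b. b) B"
  define x where "x = restrict (\<lambda>b. zmult (k b) b) B"
  have \<iota>: "\<iota> \<in> topspace (P_top B)"
    using zmult_in_cyclic_subgroup[of 1] by (auto simp: \<iota>_def topspace_P_top)
  have x: "x \<in> topspace (P_top B)"
    by (auto simp: x_def topspace_P_top zmult_in_cyclic_subgroup)
  have "f (P_mask B {c} x) = zmult (k c) (f (P_mask B {c} \<iota>))" if "c \<in> B" for c
  proof -
    have "P_mask B {c} x = restrict (\<lambda>b. zmult (k c) (P_mask B {c} \<iota> b)) B"
      unfolding P_mask_def x_def \<iota>_def by (intro restrict_ext) auto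
    then show ?thesis
      using P_additive_zmult[OF add P_mask_in_topspace[OF \<iota>]] by simp
  qed
  then show ?thesis
    using continuous_P_additive_has_sum[OF cont add x]
    unfolding x_def \<iota>_def by (subst (asm) has_sum_cong) auto
qed

lemma contains_copy_of_P_imp_absolutely_summable:
  fixes B :: "'a::topological_ab_group_add set"
  assumes "infinite B" "contains_copy_of_P B"
  shows "\<exists>A::'a set. infinite A \<and> absolutely_summable A"
proof -
  obtain H f where bij: "bij_betw f (topspace (P_top B)) H" and add: "P_additive B f"
    and hom: "homeomorphic_map (P_top B) (subtopology euclidean H) f"
    using assms(2) unfolding contains_copy_of_P_def P_additive_def by blast
  have cont: "continuous_map (P_top B) euclidean f"
    using homeomorphic_imp_continuous_map[OF hom] continuous_map_in_subtopology by blast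
  define \<iota> where "\<iota> = restrict (\<lambda>b. b) B"
  have \<iota>: "\<iota> \<in> topspace (P_top B)"
    using zmult_in_cyclic_subgroup[of 1] by (auto simp: \<iota>_def topspace_P_top)
  define e where "e c = f (P_mask B {c} \<iota>)" for c
  have "inj_on f ((\<lambda>c. P_mask B {c} \<iota>) ` (B - {0}))"
    using bij P_mask_in_topspace[OF \<iota>] by (auto simp: bij_betw_def intro: inj_on_subset)
  then have "inj_on e (B - {0})"
    unfolding e_def[abs_def] using comp_inj_on[OF P_mask_unit_inj[of B, folded \<iota>_def]]
    by (simp add: comp_def)
  text \<open>The unit vector at a coordinate \<open>0 \<in> B\<close> is zero, which is why \<open>0\<close> is left out.\<close>
  have "e 0 = 0"
  proof -
    have "P_mask B {0} \<iota> = P_mask B {} \<iota>"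
      unfolding P_mask_def \<iota>_def by (intro restrict_ext) auto
    then show ?thesis
      using P_additive_mask_empty[OF add \<iota>] by (simp add: e_def)
  qed
  define A where "A = e ` (B - {0})"
  have "infinite A"
    using \<open>inj_on e (B - {0})\<close> assms(1) by (simp add: A_def finite_image_iff)
  moreover have "absolutely_summable A"
    unfolding absolutely_summable_iff_summable_on
  proof
    fix z :: "'a \<Rightarrow> int"
    have "((\<lambda>c. zmult (z (e c)) (e c)) has_sum f (restrict (\<lambda>b. zmult (z (e b)) b) B)) B"
      using continuous_P_additive_has_sum_zmult[OF cont add] unfolding e_def \<iota>_def .
    then have "((\<lambda>c. zmult (z (e c)) (e c)) has_sum f (restrict (\<lambda>b. zmult (z (e b)) b) B)) (B - {0})"
      using \<open>e 0 = 0\<close> by (subst has_sum_cong_neutral[where T = B]) auto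
    then show "(\<lambda>a. zmult (z a) a) summable_on A"
      unfolding A_def summable_on_def
      using has_sum_reindex[OF \<open>inj_on e (B - {0})\<close>, where g = "\<lambda>a. zmult (z a) a"]
      by (auto simp: comp_def)
  qed
  ultimately show ?thesis
    by blast
qed

subsection \<open>Choosing the subset \<open>B\<close>\<close>

definition independent_cyclic :: "'a::ab_group_add set \<Rightarrow> bool" where
  "independent_cyclic S \<longleftrightarrow>
     (\<forall>c. (\<forall>b\<in>S. c b \<in> cyclic_subgroup b) \<longrightarrow> sum c S = 0 \<longrightarrow> (\<forall>b\<in>S. c b = 0))"

text \<open>\<open>S\<close> is the part of \<open>B\<close> chosen so far and \<open>F\<close> the finite part of \<open>A\<close> excluded from
  further choices: \<open>U\<close> isolates \<open>0\<close> in \<open>gen_subgroup S\<close>, and \<open>V\<close> contains all combinations of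
  elements outside \<open>F\<close>.\<close>

definition isolating_stage :: "'a::topological_ab_group_add set \<Rightarrow> 'a set \<Rightarrow> 'a set \<Rightarrow> bool" where
  "isolating_stage A S F \<longleftrightarrow> finite F \<and> F \<subseteq> A \<and> S \<subseteq> F \<and> independent_cyclic S \<and>
     (\<exists>U V. open U \<and> 0 \<in> U \<and> U \<inter> gen_subgroup S \<subseteq> {0} \<and> open V \<and> 0 \<in> V \<and>
        (\<forall>x\<in>V. \<forall>y\<in>V. \<forall>z\<in>V. x - y - z \<in> U) \<and> gen_subgroup (A - F) \<subseteq> V)"

lemma independent_cyclic_insert:
  assumes "independent_cyclic S" "finite S" "b \<notin> S"
    and "cyclic_subgroup b \<inter> gen_subgroup S \<subseteq> {0::'a::ab_group_add}"
  shows "independent_cyclic (insert b S)"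
  unfolding independent_cyclic_def
proof (intro allI impI)
  fix c assume c: "\<forall>b'\<in>insert b S. c b' \<in> cyclic_subgroup b'" and "sum c (insert b S) = 0"
  then have "sum c S = - c b"
    using assms(2,3) by (simp add: eq_neg_iff_add_eq_0 add.commute)
  moreover have "sum c S \<in> gen_subgroup S"
    using c by (intro sum_in_gen_subgroup) auto
  moreover have "- c b \<in> cyclic_subgroup b"
    using c by (simp add: is_subgroup_uminus[OF is_subgroup_cyclic_subgroup])
  ultimately have "sum c S = 0" "c b = 0"
    using assms(4) by auto
  with c assms(1) show "\<forall>b'\<in>insert b S. c b' = 0"
    unfolding independent_cyclic_def by blast
qed

lemma isolating_stage_empty: "isolating_stage A {} {}"
proof -
  have "gen_subgroup {} \<subseteq> {0::'a}"
    by (rule gen_subgroup_least) (auto simp: is_subgroup_def)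
  then show ?thesis
    unfolding isolating_stage_def independent_cyclic_def by (intro conjI exI[of _ UNIV]) auto
qed

text \<open>Discreteness of \<open>cyclic_subgroup b\<close> lets us shrink \<open>U\<close> so that it still isolates \<open>0\<close>
  after adding \<open>b\<close>.\<close>

lemma isolated_gen_subgroup_insert:
  fixes U V N :: "'a::ab_group_add set"
  assumes "U \<inter> gen_subgroup S \<subseteq> {0}" "0 \<in> V"
    and V: "\<And>x y z. x \<in> V \<Longrightarrow> y \<in> V \<Longrightarrow> z \<in> V \<Longrightarrow> x - y - z \<in> U"
    and "cyclic_subgroup b \<subseteq> V" "N \<inter> cyclic_subgroup b \<subseteq> {0}"
  shows "(V \<inter> N) \<inter> gen_subgroup (insert b S) \<subseteq> {0}"
proof
  fix x assume x: "x \<in> (V \<inter> N) \<inter> gen_subgroup (insert b S)"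
  then obtain d c where dc: "x = d + c" "d \<in> gen_subgroup S" "c \<in> cyclic_subgroup b"
    using gen_subgroup_insert by blast
  have "d = x - c - 0"
    using dc(1) by simp
  also have "\<dots> \<in> U"
    using x dc(3) assms(2,4) by (intro V) auto
  finally have "d = 0"
    using dc(2) assms(1) by blast
  then have "c = 0"
    using x dc assms(5) by auto
  with \<open>d = 0\<close> dc(1) show "x \<in> {0}"
    by simp
qed

lemma isolating_stage_extend:
  fixes A :: "'a::topological_ab_group_add set"
  assumes disc: "\<And>a::'a. discrete_subspace (cyclic_subgroup a)"
    and "infinite A" and Cauchy: "absolutely_Cauchy_summable A"
    and "isolating_stage A S F"
  shows "\<exists>b F'. b \<in> A - F \<and> F \<subseteq> F' \<and> isolating_stage A (insert b S) F'"
proof -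
  obtain U V where F: "finite F" "F \<subseteq> A" "S \<subseteq> F" and indep: "independent_cyclic S"
    and U: "open U" "0 \<in> U" "U \<inter> gen_subgroup S \<subseteq> {0}"
    and V: "open V" "0 \<in> V" "\<And>x y z. x \<in> V \<Longrightarrow> y \<in> V \<Longrightarrow> z \<in> V \<Longrightarrow> x - y - z \<in> U"
      "gen_subgroup (A - F) \<subseteq> V"
    using assms(4) unfolding isolating_stage_def by metis
  obtain b where b: "b \<in> A - F"
    using Diff_infinite_finite[OF F(1) \<open>infinite A\<close>] by (metis ex_in_conv infinite_imp_nonempty)
  have "cyclic_subgroup b \<subseteq> V"
    using b V(4) cyclic_subgroup_subset_gen_subgroup[of b "A - F"] by blast
  obtain N where N: "open N" "N \<inter> cyclic_subgroup b = {0}"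
    using disc[of b] is_subgroup_0[OF is_subgroup_cyclic_subgroup, of b]
    unfolding discrete_subspace_def by blast
  have V_U: "V \<subseteq> U"
    using V(3)[OF _ V(2) V(2)] by auto
  have indep': "independent_cyclic (insert b S)"
    using indep F b \<open>cyclic_subgroup b \<subseteq> V\<close> U(3) V_U
    by (intro independent_cyclic_insert) (auto dest: finite_subset)
  have U': "open (V \<inter> N)" "0 \<in> V \<inter> N"
    using V(1,2) N by auto
  have isolated: "(V \<inter> N) \<inter> gen_subgroup (insert b S) \<subseteq> {0}"
    using N(2) by (intro isolated_gen_subgroup_insert[OF U(3) V(2) V(3) \<open>cyclic_subgroup b \<subseteq> V\<close>]) auto
  obtain V' where V': "open V'" "0 \<in> V'" "\<And>x y z. x \<in> V' \<Longrightarrow> y \<in> V' \<Longrightarrow> z \<in> V' \<Longrightarrow> x - y - z \<in> V \<inter> N"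
    using zero_nhds_diff3[OF U'] by blast
  obtain F'' where F'': "finite F''" "F'' \<subseteq> A" "gen_subgroup (A - F'') \<subseteq> V'"
    using Cauchy V'(1,2) unfolding absolutely_Cauchy_summable_def by blast
  define F' where "F' = insert b (F \<union> F'')"
  have "gen_subgroup (A - F') \<subseteq> V'"
    using gen_subgroup_mono[of "A - F'" "A - F''"] F''(3) by (auto simp: F'_def)
  then have "isolating_stage A (insert b S) F'"
    unfolding isolating_stage_def using F F'' b U' isolated V' indep'
    by (intro conjI exI[of _ "V \<inter> N"] exI[of _ V']) (auto simp: F'_def)
  with b show ?thesis
    by (intro exI[of _ b] exI[of _ F'] conjI) (auto simp: F'_def)
qed

definition isolating_subset :: "'a::topological_ab_group_add set \<Rightarrow> 'a set \<Rightarrow> bool" where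
  "isolating_subset A B \<longleftrightarrow> B \<subseteq> A \<and> (\<exists>S F. B = (\<Union>n. S n) \<and> incseq S \<and>
     (\<forall>n. isolating_stage A (S n) (F n) \<and> B - S n \<subseteq> A - F n))"

lemma exists_isolating_stages:
  fixes A :: "'a::topological_ab_group_add set"
  assumes disc: "\<And>a::'a. discrete_subspace (cyclic_subgroup a)"
    and "infinite A" and Cauchy: "absolutely_Cauchy_summable A"
  shows "\<exists>(S::nat \<Rightarrow> 'a set) F. (\<forall>n. isolating_stage A (S n) (F n) \<and> card (S n) = n) \<and>
    (\<forall>n. (\<exists>b\<in>A - F n. S (Suc n) = insert b (S n)) \<and> F n \<subseteq> F (Suc n))"
proof -
  have "\<exists>SF::nat \<Rightarrow> 'a set \<times> 'a set.
      \<forall>n. (isolating_stage A (fst (SF n)) (snd (SF n)) \<and> card (fst (SF n)) = n) \<and>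
      (\<exists>b\<in>A - snd (SF n). fst (SF (Suc n)) = insert b (fst (SF n)) \<and> snd (SF n) \<subseteq> snd (SF (Suc n)))"
  proof (rule dependent_nat_choice)
    show "\<exists>SF. isolating_stage A (fst SF) (snd SF) \<and> card (fst SF) = 0"
      by (intro exI[of _ "({}, {})"]) (simp add: isolating_stage_empty)
  next
    fix SF n assume SF: "isolating_stage A (fst SF) (snd SF) \<and> card (fst SF) = n"
    then obtain b F' where b: "b \<in> A - snd SF" "snd SF \<subseteq> F'" "isolating_stage A (insert b (fst SF)) F'"
      using isolating_stage_extend[OF disc \<open>infinite A\<close> Cauchy] by blast
    moreover have "finite (fst SF)" "b \<notin> fst SF"
      using SF b(1) unfolding isolating_stage_def by (auto dest: finite_subset)
    ultimately show "\<exists>SF'. (isolating_stage A (fst SF') (snd SF') \<and> card (fst SF') = Suc n) \<and>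
        (\<exists>b\<in>A - snd SF. fst SF' = insert b (fst SF) \<and> snd SF \<subseteq> snd SF')"
      using SF by (intro exI[of _ "(insert b (fst SF), F')"]) auto
  qed
  then obtain SF :: "nat \<Rightarrow> 'a set \<times> 'a set"
    where "\<forall>n. (isolating_stage A (fst (SF n)) (snd (SF n)) \<and> card (fst (SF n)) = n) \<and>
      (\<exists>b\<in>A - snd (SF n). fst (SF (Suc n)) = insert b (fst (SF n)) \<and> snd (SF n) \<subseteq> snd (SF (Suc n)))"
    by blast
  then show ?thesis
    by (intro exI[of _ "\<lambda>n. fst (SF n)"] exI[of _ "\<lambda>n. snd (SF n)"]) blast
qed

text \<open>An element chosen after stage \<open>n\<close> was chosen outside \<open>F k \<supseteq> F n\<close> for some \<open>k \<ge> n\<close>.\<close>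

lemma chosen_later_not_excluded:
  fixes S F :: "nat \<Rightarrow> 'a set"
  assumes "S 0 = {}" "incseq F" and step: "\<And>n. \<exists>b\<in>A - F n. S (Suc n) = insert b (S n)"
    and "x \<in> S m" "x \<notin> S n"
  shows "x \<notin> F n"
  using assms(4,5)
proof (induction m)
  case (Suc m)
  have "incseq S"
    using step by (intro incseq_SucI) blast
  show ?case
  proof (cases "x \<in> S m")
    case False
    then have x: "x \<in> A - F m"
      using Suc.prems(1) step[of m] by auto
    show ?thesis
    proof (cases "n \<le> m")
      case True
      then show ?thesis
        using x monoD[OF \<open>incseq F\<close> True] by blast
    next
      case False
      then have "S (Suc m) \<subseteq> S n"
        using monoD[OF \<open>incseq S\<close>] by simp
      then show ?thesis
        using Suc.prems by blast
    qed
  qed (use Suc in blast)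
qed (simp add: assms(1))

lemma exists_isolating_subset:
  fixes A :: "'a::topological_ab_group_add set"
  assumes disc: "\<And>a::'a. discrete_subspace (cyclic_subgroup a)"
    and "infinite A" and Cauchy: "absolutely_Cauchy_summable A"
  shows "\<exists>B. infinite B \<and> isolating_subset A B"
proof -
  obtain S F :: "nat \<Rightarrow> 'a set" where stage: "\<And>n. isolating_stage A (S n) (F n)"
    and card: "\<And>n. card (S n) = n"
    and step: "\<And>n. \<exists>b\<in>A - F n. S (Suc n) = insert b (S n)"
    and F_Suc: "\<And>n. F n \<subseteq> F (Suc n)"
    using exists_isolating_stages[OF disc \<open>infinite A\<close> Cauchy] by blast
  have "incseq S"
    using step by (intro incseq_SucI) blast
  have "incseq F"
    using F_Suc by (rule incseq_SucI)
  have S_F: "S n \<subseteq> F n" "F n \<subseteq> A" "finite (S n)" for n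
    using stage[of n] by (auto simp: isolating_stage_def dest: finite_subset)
  define B where "B = (\<Union>n. S n)"
  have "infinite B"
  proof
    assume "finite B"
    moreover have "S (Suc (card B)) \<subseteq> B"
      by (auto simp: B_def)
    ultimately have "card (S (Suc (card B))) \<le> card B"
      by (rule card_mono)
    then show False
      using card[of "Suc (card B)"] by simp
  qed
  have "S 0 = {}"
    using card[of 0] S_F(3)[of 0] by simp
  then have "B - S n \<subseteq> A - F n" for n
    using chosen_later_not_excluded[OF _ \<open>incseq F\<close> step] S_F(1,2) unfolding B_def by blast
  moreover have "B \<subseteq> A"
    using S_F(1,2) unfolding B_def by blast
  ultimately show ?thesis
    unfolding isolating_subset_def using \<open>infinite B\<close> \<open>incseq S\<close> stage
    by (intro exI[of _ B] conjI exI[of _ S] exI[of _ F]) (auto simp: B_def)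
qed

subsection \<open>Summation embeds \<open>P_B\<close>\<close>

definition P_diff :: "'a::ab_group_add set \<Rightarrow> ('a \<Rightarrow> 'a) \<Rightarrow> ('a \<Rightarrow> 'a) \<Rightarrow> 'a \<Rightarrow> 'a" where
  "P_diff B x y = restrict (\<lambda>b. x b - y b) B"

lemma P_diff_in_topspace:
  "x \<in> topspace (P_top B) \<Longrightarrow> y \<in> topspace (P_top B) \<Longrightarrow> P_diff B x y \<in> topspace (P_top B)"
  by (auto simp: topspace_P_top P_diff_def PiE_iff is_subgroup_diff[OF is_subgroup_cyclic_subgroup])

lemma summable_on_P_top:
  assumes "absolutely_summable B" "w \<in> topspace (P_top B)"
  shows "w summable_on B"
proof -
  have "\<forall>b\<in>B. \<exists>k. w b = zmult k b"
    using assms(2) by (auto simp: topspace_P_top PiE_iff cyclic_subgroup_def)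
  then obtain k where "\<forall>b\<in>B. w b = zmult (k b) b"
    by (rule bchoice[THEN exE])
  moreover have "(\<lambda>b. zmult (k b) b) summable_on B"
    by (rule absolutely_summable_summable_on[OF assms(1)])
  ultimately show ?thesis
    by (subst summable_on_cong[where g = "\<lambda>b. zmult (k b) b"]) simp_all
qed

lemma has_sum_P_add:
  fixes x y :: "'a \<Rightarrow> 'a::topological_ab_group_add"
  assumes "(x has_sum s) B" "(y has_sum t) B"
  shows "(P_add B x y has_sum s + t) B"
proof -
  have "((\<lambda>b. x b + y b) has_sum s + t) B"
    using assms by (rule has_sum_add)
  then show ?thesis
    unfolding P_add_def by (subst has_sum_cong[where g = "\<lambda>b. x b + y b"]) simp_all
qed

lemma has_sum_P_diff:
  fixes x y :: "'a \<Rightarrow> 'a::topological_ab_group_add"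
  assumes "(x has_sum s) B" "(y has_sum t) B"
  shows "(P_diff B x y has_sum s - t) B"
proof -
  have "((\<lambda>b. - y b) has_sum - t) B"
    using has_sum_uminus[where f = y and a = "- t"] assms(2) by simp
  with assms(1) have "((\<lambda>b. x b + - y b) has_sum s + - t) B"
    by (rule has_sum_add)
  then show ?thesis
    unfolding P_diff_def by (subst has_sum_cong[where g = "\<lambda>b. x b + - y b"]) simp_all
qed

lemma infsum_P_add:
  fixes B :: "'a::{topological_ab_group_add, t2_space} set"
  assumes "absolutely_summable B" "x \<in> topspace (P_top B)" "y \<in> topspace (P_top B)"
  shows "infsum (P_add B x y) B = infsum x B + infsum y B"
  using assms by (intro infsumI has_sum_P_add has_sum_infsum summable_on_P_top)

lemma infsum_P_diff:
  fixes B :: "'a::{topological_ab_group_add, t2_space} set"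
  assumes "absolutely_summable B" "x \<in> topspace (P_top B)" "y \<in> topspace (P_top B)"
  shows "infsum (P_diff B x y) B = infsum x B - infsum y B"
  using assms by (intro infsumI has_sum_P_diff has_sum_infsum summable_on_P_top)

lemma has_sum_minus_sum_decompose:
  fixes w :: "'a \<Rightarrow> 'a::topological_ab_group_add"
  assumes "(w has_sum s) B" "\<And>b. b \<in> B \<Longrightarrow> w b \<in> cyclic_subgroup b"
    and "finite S" "S \<subseteq> B" "open V" "0 \<in> V"
  shows "\<exists>v\<in>V. \<exists>g\<in>gen_subgroup (B - S). s - sum w S = v + g"
proof -
  obtain F where F: "finite F" "F \<subseteq> B"
    and near: "\<And>E. finite E \<Longrightarrow> F \<subseteq> E \<Longrightarrow> E \<subseteq> B \<Longrightarrow> s - sum w E \<in> V"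
    by (fact has_sum_nhds_0D[OF assms(1,5,6)])
  define E where "E = F \<union> S"
  have "s - sum w E \<in> V"
    using F assms(3,4) by (intro near) (auto simp: E_def)
  moreover have "sum w (E - S) \<in> gen_subgroup (B - S)"
    using F assms(2) by (intro sum_in_gen_subgroup) (auto simp: E_def)
  moreover have "s - sum w S = (s - sum w E) + sum w (E - S)"
    using sum.subset_diff[of S E w] F(1) assms(3) by (simp add: E_def algebra_simps)
  ultimately show ?thesis
    by blast
qed

lemma isolating_stage_small_sum_vanishes:
  fixes A :: "'a::{topological_ab_group_add, t2_space} set"
  assumes summable: "absolutely_summable B" and stage: "isolating_stage A S F"
    and "S \<subseteq> B" "B - S \<subseteq> A - F"
  shows "\<exists>W. open W \<and> 0 \<in> W \<and>
    (\<forall>w\<in>topspace (P_top B). infsum w B \<in> W \<longrightarrow> (\<forall>b\<in>S. w b = 0))"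
proof -
  obtain U V where F: "finite F" "S \<subseteq> F" and indep: "independent_cyclic S"
    and U: "U \<inter> gen_subgroup S \<subseteq> {0}"
    and V: "open V" "0 \<in> V" "\<And>x y z. x \<in> V \<Longrightarrow> y \<in> V \<Longrightarrow> z \<in> V \<Longrightarrow> x - y - z \<in> U"
      "gen_subgroup (A - F) \<subseteq> V"
    using stage unfolding isolating_stage_def by metis
  have "w b = 0" if w: "w \<in> topspace (P_top B)" "infsum w B \<in> V" and "b \<in> S" for w b
  proof -
    have cyc: "\<And>b. b \<in> B \<Longrightarrow> w b \<in> cyclic_subgroup b"
      using w(1) by (auto simp: topspace_P_top PiE_iff)
    obtain v g where vg: "v \<in> V" "g \<in> gen_subgroup (B - S)" "infsum w B - sum w S = v + g"
      using has_sum_minus_sum_decompose[OF has_sum_infsum[OF summable_on_P_top[OF summable w(1)]]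
          cyc _ \<open>S \<subseteq> B\<close> V(1,2)] F \<open>S \<subseteq> B\<close> by (auto dest: finite_subset)
    have "g \<in> V"
      using vg(2) gen_subgroup_mono[OF \<open>B - S \<subseteq> A - F\<close>] V(4) by blast
    have "sum w S = infsum w B - v - g"
      using vg(3) by (simp add: algebra_simps)
    also have "\<dots> \<in> U"
      using V(3)[OF w(2) vg(1) \<open>g \<in> V\<close>] .
    finally have "sum w S \<in> U" .
    moreover have "sum w S \<in> gen_subgroup S"
      using cyc \<open>S \<subseteq> B\<close> by (intro sum_in_gen_subgroup) auto
    ultimately have "sum w S = 0"
      using U by blast
    then show ?thesis
      using indep cyc \<open>S \<subseteq> B\<close> \<open>b \<in> S\<close> unfolding independent_cyclic_def by blast
  qed
  with V(1,2) show ?thesis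
    by blast
qed

lemma absolutely_summable_infsum_small:
  fixes B :: "'a::{topological_ab_group_add, t2_space} set"
  assumes summable: "absolutely_summable B" and "open W" "0 \<in> W"
  shows "\<exists>F. finite F \<and> F \<subseteq> B \<and>
    (\<forall>w\<in>topspace (P_top B). (\<forall>b\<in>F. w b = 0) \<longrightarrow> infsum w B \<in> W)"
proof -
  obtain V where V: "open V" "0 \<in> V" "\<And>u v. u \<in> V \<Longrightarrow> v \<in> V \<Longrightarrow> u - v \<in> W"
    using zero_nhds_diff[OF assms(2,3)] by blast
  obtain F where F: "finite F" "F \<subseteq> B" "gen_subgroup (B - F) \<subseteq> V"
    using absolutely_summable_imp_Cauchy_summable[OF summable] V(1,2)
    unfolding absolutely_Cauchy_summable_def by blast
  have "\<forall>w\<in>topspace (P_top B). (\<forall>b\<in>F. w b = 0) \<longrightarrow> infsum w B \<in> W"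
  proof (intro ballI impI)
    fix w assume w: "w \<in> topspace (P_top B)" "\<forall>b\<in>F. w b = 0"
    have "\<exists>v\<in>V. \<exists>g\<in>gen_subgroup (B - F). infsum w B - sum w F = v + g"
      using w(1)
      by (intro has_sum_minus_sum_decompose[OF has_sum_infsum[OF summable_on_P_top[OF summable w(1)]]
          _ F(1,2) V(1,2)]) (auto simp: topspace_P_top PiE_iff)
    then obtain v g where vg: "v \<in> V" "g \<in> gen_subgroup (B - F)" "infsum w B - sum w F = v + g"
      by blast
    have "sum w F = 0"
      using w(2) by simp
    with vg(3) have "infsum w B = v - (- g)"
      by simp
    also have "\<dots> \<in> W"
      using vg(2) F(3) is_subgroup_uminus[OF is_subgroup_gen_subgroup] by (intro V(3)[OF vg(1)]) blast
    finally show "infsum w B \<in> W" .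
  qed
  with F(1,2) show ?thesis
    by blast
qed

lemma continuous_map_infsum_P_top:
  fixes B :: "'a::{topological_ab_group_add, t2_space} set"
  assumes disc: "\<And>a::'a. discrete_subspace (cyclic_subgroup a)"
    and summable: "absolutely_summable B"
  shows "continuous_map (P_top B) euclidean (\<lambda>w. infsum w B)"
  unfolding continuous_map_def
proof (intro conjI allI impI)
  fix U :: "'a set" assume "openin euclidean U"
  then have "open U"
    by simp
  show "openin (P_top B) {w \<in> topspace (P_top B). infsum w B \<in> U}"
  proof (rule finitely_determined_imp_openin_P_top[OF disc])
    fix x assume "x \<in> {w \<in> topspace (P_top B). infsum w B \<in> U}"
    then have x: "x \<in> topspace (P_top B)" "infsum x B \<in> U"
      by auto
    define W where "W = (\<lambda>u. infsum x B + u) -` U"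
    have "open W" and "0 \<in> W"
      using \<open>open U\<close> x(2) by (auto simp: W_def intro!: open_vimage continuous_intros)
    obtain F where F: "finite F" "F \<subseteq> B"
      and small: "\<forall>w\<in>topspace (P_top B). (\<forall>b\<in>F. w b = 0) \<longrightarrow> infsum w B \<in> W"
      using absolutely_summable_infsum_small[OF summable \<open>open W\<close> \<open>0 \<in> W\<close>] by blast
    have "\<forall>y\<in>topspace (P_top B). (\<forall>b\<in>F. y b = x b) \<longrightarrow> infsum y B \<in> U"
    proof (intro ballI impI)
      fix y assume y: "y \<in> topspace (P_top B)" "\<forall>b\<in>F. y b = x b"
      have "\<forall>b\<in>F. P_diff B y x b = 0"
        using y(2) F(2) by (auto simp: P_diff_def)
      then have "infsum (P_diff B y x) B \<in> W"
        using small P_diff_in_topspace[OF y(1) x(1)] by blast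
      then show "infsum y B \<in> U"
        using infsum_P_diff[OF summable y(1) x(1)] by (simp add: W_def)
    qed
    with F show "\<exists>F. finite F \<and> F \<subseteq> B \<and> (\<forall>y\<in>topspace (P_top B).
        (\<forall>b\<in>F. y b = x b) \<longrightarrow> y \<in> {w \<in> topspace (P_top B). infsum w B \<in> U})"
      by blast
  qed auto
qed auto

lemma finite_subset_UN_incseq:
  assumes "finite F" "F \<subseteq> (\<Union>n. S n)" "incseq S"
  shows "\<exists>n. F \<subseteq> S n"
  using assms(1,2)
proof (induction F rule: finite_induct)
  case (insert x F)
  then obtain m n where "x \<in> S m" "F \<subseteq> S n"
    by auto
  then have "insert x F \<subseteq> S (max m n)"
    using monoD[OF assms(3), of m "max m n"] monoD[OF assms(3), of n "max m n"] by auto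
  then show ?case ..
qed simp

lemma isolating_subset_detects_coordinates:
  fixes A :: "'a::{topological_ab_group_add, t2_space} set"
  assumes summable: "absolutely_summable A" and "isolating_subset A B"
    and "finite C" "C \<subseteq> B"
  shows "\<exists>W. open W \<and> 0 \<in> W \<and>
    (\<forall>w\<in>topspace (P_top B). infsum w B \<in> W \<longrightarrow> (\<forall>b\<in>C. w b = 0))"
proof -
  obtain S F where "B \<subseteq> A" "B = (\<Union>n. S n)" "incseq S"
    and stage: "\<And>n. isolating_stage A (S n) (F n)" and tail: "\<And>n. B - S n \<subseteq> A - F n"
    using assms(2) unfolding isolating_subset_def by metis
  have "C \<subseteq> (\<Union>n. S n)"
    using assms(4) \<open>B = (\<Union>n. S n)\<close> by simp
  then obtain n where "C \<subseteq> S n"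
    using finite_subset_UN_incseq[OF assms(3) _ \<open>incseq S\<close>] by blast
  have "S n \<subseteq> B"
    using \<open>B = (\<Union>n. S n)\<close> by auto
  then obtain W where "open W" "0 \<in> W"
    and W: "\<forall>w\<in>topspace (P_top B). infsum w B \<in> W \<longrightarrow> (\<forall>b\<in>S n. w b = 0)"
    using isolating_stage_small_sum_vanishes[OF absolutely_summable_subset[OF summable \<open>B \<subseteq> A\<close>]
        stage[of n] _ tail[of n]]
    by auto
  with \<open>C \<subseteq> S n\<close> show ?thesis
    by (intro exI[of _ W]) auto
qed

lemma isolating_subset_inj_infsum:
  fixes A :: "'a::{topological_ab_group_add, t2_space} set"
  assumes summable: "absolutely_summable A" and isolating: "isolating_subset A B"
  shows "inj_on (\<lambda>w. infsum w B) (topspace (P_top B))"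
proof (rule inj_onI)
  fix x y assume xy: "x \<in> topspace (P_top B)" "y \<in> topspace (P_top B)" "infsum x B = infsum y B"
  have summable_B: "absolutely_summable B"
    using isolating absolutely_summable_subset[OF summable] unfolding isolating_subset_def by blast
  have "x b = y b" if "b \<in> B" for b
  proof -
    obtain W where "0 \<in> W"
      and W: "\<forall>w\<in>topspace (P_top B). infsum w B \<in> W \<longrightarrow> (\<forall>b'\<in>{b}. w b' = 0)"
      using isolating_subset_detects_coordinates[OF summable isolating, of "{b}"] \<open>b \<in> B\<close> by auto
    moreover have "infsum (P_diff B x y) B = 0"
      using infsum_P_diff[OF summable_B xy(1,2)] xy(3) by simp
    ultimately have "P_diff B x y b = 0"
      using P_diff_in_topspace[OF xy(1,2)] by simp
    with \<open>b \<in> B\<close> show ?thesis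
      by (simp add: P_diff_def)
  qed
  with xy(1,2) show "x = y"
    by (intro PiE_ext[of _ B cyclic_subgroup]) (auto simp: topspace_P_top)
qed

lemma isolating_subset_open_map_infsum:
  fixes A :: "'a::{topological_ab_group_add, t2_space} set"
  assumes summable: "absolutely_summable A" and isolating: "isolating_subset A B"
  shows "open_map (P_top B) (subtopology euclidean ((\<lambda>w. infsum w B) ` topspace (P_top B)))
    (\<lambda>w. infsum w B)"
  unfolding open_map_def
proof (intro allI impI)
  let ?T = "topspace (P_top B)" and ?H = "(\<lambda>w. infsum w B) ` topspace (P_top B)"
  have summable_B: "absolutely_summable B"
    using isolating absolutely_summable_subset[OF summable] unfolding isolating_subset_def by blast
  fix O' assume O': "openin (P_top B) O'"
  show "openin (subtopology euclidean ?H) ((\<lambda>w. infsum w B) ` O')"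
  proof (subst openin_subopen, intro ballI)
    fix p assume "p \<in> (\<lambda>w. infsum w B) ` O'"
    then obtain x where x: "x \<in> O'" "p = infsum x B"
      by blast
    have "x \<in> ?T"
      using openin_subset[OF O'] x(1) by blast
    obtain C where C: "finite C" "C \<subseteq> B" and in_O: "\<forall>y\<in>?T. (\<forall>b\<in>C. y b = x b) \<longrightarrow> y \<in> O'"
      using openin_P_top_imp_finitely_determined[OF O' x(1)] by blast
    obtain W where W: "open W" "0 \<in> W" "\<forall>w\<in>?T. infsum w B \<in> W \<longrightarrow> (\<forall>b\<in>C. w b = 0)"
      using isolating_subset_detects_coordinates[OF summable isolating C] by blast
    define Q where "Q = ?H \<inter> (\<lambda>u. u - infsum x B) -` W"
    have "openin (subtopology euclidean ?H) Q"
      unfolding Q_def openin_subtopology using W(1)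
      by (intro exI[of _ "(\<lambda>u. u - infsum x B) -` W"]) (auto intro!: open_vimage continuous_intros)
    moreover have "p \<in> Q"
      using x \<open>x \<in> ?T\<close> W(2) by (auto simp: Q_def)
    moreover have "Q \<subseteq> (\<lambda>w. infsum w B) ` O'"
    proof
      fix u assume "u \<in> Q"
      then obtain y where y: "y \<in> ?T" "u = infsum y B" "infsum (P_diff B y x) B \<in> W"
        using infsum_P_diff[OF summable_B _ \<open>x \<in> ?T\<close>] by (auto simp: Q_def)
      then have vanish: "\<forall>b\<in>C. P_diff B y x b = 0"
        using W(3) P_diff_in_topspace \<open>x \<in> ?T\<close> by blast
      have "y b = x b" if "b \<in> C" for b
      proof -
        have "b \<in> B" "P_diff B y x b = 0"
          using that C(2) vanish by auto
        then show ?thesis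
          by (simp add: P_diff_def)
      qed
      then show "u \<in> (\<lambda>w. infsum w B) ` O'"
        using in_O y(1,2) by blast
    qed
    ultimately show "\<exists>Q. openin (subtopology euclidean ?H) Q \<and> p \<in> Q \<and> Q \<subseteq> (\<lambda>w. infsum w B) ` O'"
      by blast
  qed
qed

lemma isolating_subset_contains_copy_of_P:
  fixes A :: "'a::{topological_ab_group_add, t2_space} set"
  assumes disc: "\<And>a::'a. discrete_subspace (cyclic_subgroup a)"
    and summable: "absolutely_summable A" and isolating: "isolating_subset A B"
  shows "contains_copy_of_P B"
proof -
  let ?T = "topspace (P_top B)" and ?\<phi> = "\<lambda>w. infsum w B"
  define H where "H = ?\<phi> ` ?T"
  have summable_B: "absolutely_summable B"
    using isolating absolutely_summable_subset[OF summable] unfolding isolating_subset_def by blast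
  have "is_subgroup H"
    unfolding is_subgroup_def
  proof (intro conjI ballI)
    have "restrict (\<lambda>_. 0) B \<in> ?T" "?\<phi> (restrict (\<lambda>_. 0) B) = 0"
      by (auto simp: topspace_P_top is_subgroup_0[OF is_subgroup_cyclic_subgroup] intro: infsum_0)
    then show "0 \<in> H"
      unfolding H_def by (metis image_eqI)
  next
    fix u v assume "u \<in> H" "v \<in> H"
    then obtain x y where "x \<in> ?T" "y \<in> ?T" "u = ?\<phi> x" "v = ?\<phi> y"
      unfolding H_def by blast
    then have "u - v = ?\<phi> (P_diff B x y)" "P_diff B x y \<in> ?T"
      using infsum_P_diff[OF summable_B] P_diff_in_topspace by auto
    then show "u - v \<in> H"
      unfolding H_def by blast
  qed
  moreover have "homeomorphic_map (P_top B) (subtopology euclidean H) ?\<phi>"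
    using continuous_map_infsum_P_top[OF disc summable_B] isolating_subset_inj_infsum[OF summable isolating]
      isolating_subset_open_map_infsum[OF summable isolating]
    by (intro bijective_open_imp_homeomorphic_map) (auto simp: H_def continuous_map_in_subtopology)
  moreover have "bij_betw ?\<phi> ?T H"
    using isolating_subset_inj_infsum[OF summable isolating] by (simp add: bij_betw_def H_def)
  ultimately show ?thesis
    unfolding contains_copy_of_P_def using infsum_P_add[OF summable_B]
    by (intro exI[of _ H] exI[of _ ?\<phi>]) auto
qed

theorem corollary7p4:
  assumes "\<forall>a::'a::{topological_ab_group_add, t2_space}. discrete_subspace (cyclic_subgroup a)"
  shows "((\<exists>A::'a set. infinite A \<and> absolutely_summable A)
            \<longleftrightarrow> (\<exists>B::'a set. infinite B \<and> contains_copy_of_P B))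
         \<and> (group_complete TYPE('a) \<longrightarrow>
            ((\<exists>A::'a set. infinite A \<and> absolutely_summable A)
              \<longleftrightarrow> (\<exists>A::'a set. infinite A \<and> absolutely_Cauchy_summable A)))"
proof (intro conjI impI iffI)
  have disc: "\<And>a::'a. discrete_subspace (cyclic_subgroup a)"
    using assms by blast
  assume "\<exists>A::'a set. infinite A \<and> absolutely_summable A"
  then obtain A :: "'a set" where A: "infinite A" "absolutely_summable A"
    by blast
  then obtain B where "infinite B" "isolating_subset A B"
    using exists_isolating_subset[OF disc A(1) absolutely_summable_imp_Cauchy_summable[OF A(2)]]
    by blast
  then show "\<exists>B::'a set. infinite B \<and> contains_copy_of_P B"
    using isolating_subset_contains_copy_of_P[OF disc A(2)] by blast
next
  assume "\<exists>B::'a set. infinite B \<and> contains_copy_of_P B"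
  then show "\<exists>A::'a set. infinite A \<and> absolutely_summable A"
    using contains_copy_of_P_imp_absolutely_summable by blast
next
  assume "\<exists>A::'a set. infinite A \<and> absolutely_summable A"
  then show "\<exists>A::'a set. infinite A \<and> absolutely_Cauchy_summable A"
    using absolutely_summable_imp_Cauchy_summable by blast
next
  assume "group_complete TYPE('a)" "\<exists>A::'a set. infinite A \<and> absolutely_Cauchy_summable A"
  then show "\<exists>A::'a set. infinite A \<and> absolutely_summable A"
    using Cauchy_summable_imp_absolutely_summable by blast
qed

end
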